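(* Let $\xi<-6$. There exists $\phi_0\in(0,\pi/4]$ such that for every $\phi\in(0,\phi_0]$ there is $c=c(\xi,\phi)>0$ such that for $z=u+\mathrm{i}v$ and each $i\in\{1,2,5,6\}$, $$\operatorname{Re}[2\mathrm{i}\theta(z)]\ge c v^2\ \text{ for } z\in\Omega_{i1}\cup\Omega_{i3},\qquad \operatorname{Re}[2\mathrm{i}\theta(z)]\le -c v^2\ \text{ for } z\in\Omega_{i2}\cup\Omega_{i4}.$$
   Context: $\theta(z)=\frac12(z+z^{-1})\big[\xi-2+(z-z^{-1})^2\big]$. For $\xi<-6$ the stationary points of $\theta$ are $\zeta_1=\sqrt{(-\xi-\sqrt{\xi^2-36})/6}\in(0,1)$, $\zeta_2=-\zeta_1$, $\zeta_3=1$, $\zeta_4=-1$, $\zeta_5=1/\zeta_1$, $\zeta_6=-\zeta_5$. With $z=u+\mathrm{i}v$ and $t_\phi=\tan\phi$, the regions are: $\Omega_{11}=\{\zeta_1/2<u<\zeta_1,\ 0<v<(\zeta_1-u)t_\phi\}$, $\Omega_{12}=\{\zeta_1<u<\frac{\zeta_1+1}{2},\ 0<v<(u-\zeta_1)t_\phi\}$, $\Omega_{13}=\{\zeta_1<u<\frac{\zeta_1+1}{2},\ -(u-\zeta_1)t_\phi<v<0\}$, $\Omega_{14}=\{\zeta_1/2<u<\zeta_1,\ -(\zeta_1-u)t_\phi<v<0\}$; $\Omega_{21}=\{\zeta_2<u<\zeta_2/2,\ 0<v<(u-\zeta_2)t_\phi\}$, $\Omega_{22}=\{\frac{\zeta_2-1}{2}<u<\zeta_2,\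 0<v<(\zeta_2-u)t_\phi\}$, $\Omega_{23}=\{\frac{\zeta_2-1}{2}<u<\zeta_2,\ -(\zeta_2-u)t_\phi<v<0\}$, $\Omega_{24}=\{\zeta_2<u<\zeta_2/2,\ -(u-\zeta_2)t_\phi<v<0\}$; $\Omega_{51}=\{\frac{1+\zeta_5}{2}<u<\zeta_5,\ 0<v<(\zeta_5-u)t_\phi\}$, $\Omega_{52}=\{u>\zeta_5,\ 0<v<(u-\zeta_5)t_\phi\}$, $\Omega_{53}=\{u>\zeta_5,\ -(u-\zeta_5)t_\phi<v<0\}$, $\Omega_{54}=\{\frac{1+\zeta_5}{2}<u<\zeta_5,\ -(\zeta_5-u)t_\phi<v<0\}$; $\Omega_{61}=\{\zeta_6<u<\frac{\zeta_6-1}{2},\ 0<v<(u-\zeta_6)t_\phi\}$, $\Omega_{62}=\{u<\zeta_6,\ 0<v<(\zeta_6-u)t_\phi\}$, $\Omega_{63}=\{u<\zeta_6,\ -(\zeta_6-u)t_\phi<v<0\}$, $\Omega_{64}=\{\zeta_6<u<\frac{\zeta_6-1}{2},\ -(u-\zeta_6)t_\phi<v<0\}$. *)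

theory Defs
  imports "HOL-Analysis.Analysis"
begin

definition theta :: "real \<Rightarrow> complex \<Rightarrow> complex" where
  "theta xi z = (1/2) * (z + inverse z) * (complex_of_real (xi - 2) + (z - inverse z)^2)"

definition zeta1 :: "real \<Rightarrow> real" where
  "zeta1 xi = sqrt ((- xi - sqrt (xi^2 - 36)) / 6)"

definition zeta2 :: "real \<Rightarrow> real" where "zeta2 xi = - zeta1 xi"
definition zeta5 :: "real \<Rightarrow> real" where "zeta5 xi = 1 / zeta1 xi"
definition zeta6 :: "real \<Rightarrow> real" where "zeta6 xi = - zeta5 xi"

definition Omega :: "real \<Rightarrow> real \<Rightarrow> nat \<Rightarrow> nat \<Rightarrow> complex set" where
  "Omega xi phi i j =
    (let t = tan phi; z1 = zeta1 xi; z2 = zeta2 xi; z5 = zeta5 xi; z6 = zeta6 xi in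
     {z. let u = Re z; v = Im z in
      (i = 1 \<and> j = 1 \<and> z1/2 < u \<and> u < z1 \<and> 0 < v \<and> v < (z1 - u) * t) \<or>
      (i = 1 \<and> j = 2 \<and> z1 < u \<and> u < (z1 + 1)/2 \<and> 0 < v \<and> v < (u - z1) * t) \<or>
      (i = 1 \<and> j = 3 \<and> z1 < u \<and> u < (z1 + 1)/2 \<and> - ((u - z1) * t) < v \<and> v < 0) \<or>
      (i = 1 \<and> j = 4 \<and> z1/2 < u \<and> u < z1 \<and> - ((z1 - u) * t) < v \<and> v < 0) \<or>
      (i = 2 \<and> j = 1 \<and> z2 < u \<and> u < z2/2 \<and> 0 < v \<and> v < (u - z2) * t) \<or>
      (i = 2 \<and> j = 2 \<and> (z2 - 1)/2 < u \<and> u < z2 \<and> 0 < v \<and> v < (z2 - u) * t) \<or>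
      (i = 2 \<and> j = 3 \<and> (z2 - 1)/2 < u \<and> u < z2 \<and> - ((z2 - u) * t) < v \<and> v < 0) \<or>
      (i = 2 \<and> j = 4 \<and> z2 < u \<and> u < z2/2 \<and> - ((u - z2) * t) < v \<and> v < 0) \<or>
      (i = 5 \<and> j = 1 \<and> (1 + z5)/2 < u \<and> u < z5 \<and> 0 < v \<and> v < (z5 - u) * t) \<or>
      (i = 5 \<and> j = 2 \<and> z5 < u \<and> 0 < v \<and> v < (u - z5) * t) \<or>
      (i = 5 \<and> j = 3 \<and> z5 < u \<and> - ((u - z5) * t) < v \<and> v < 0) \<or>
      (i = 5 \<and> j = 4 \<and> (1 + z5)/2 < u \<and> u < z5 \<and> - ((z5 - u) * t) < v \<and> v < 0) \<or>
      (i = 6 \<and> j = 1 \<and> z6 < u \<and> u < (z6 - 1)/2 \<and> 0 < v \<and> v < (u - z6) * t) \<or>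
      (i = 6 \<and> j = 2 \<and> u < z6 \<and> 0 < v \<and> v < (z6 - u) * t) \<or>
      (i = 6 \<and> j = 3 \<and> u < z6 \<and> - ((z6 - u) * t) < v \<and> v < 0) \<or>
      (i = 6 \<and> j = 4 \<and> z6 < u \<and> u < (z6 - 1)/2 \<and> - ((u - z6) * t) < v \<and> v < 0)})"

end

theory Submission
  imports Defs
begin

(* Write w = z + 1/z and A = zeta1 + 1/zeta1.  Stationarity of theta at zeta1 means
   3 A^2 = 6 - xi, so theta = w (w^2 - 3 A^2) / 2 and
     Re[2 i theta] = Im w * (3 (A^2 - (Re w)^2) + (Im w)^2).
   Near zeta1 and near zeta5 = 1/zeta1 both factors are bounded below, with fixed signs, by
   multiples of v = Im z: Im w = v (1 - 1/|z|^2) has the sign of v outside the unit circle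
   and the opposite sign inside it, while A - Re w equals (u - zeta1)(1/zeta1 - u)/u up to an
   O(v^2) error, which the distance to zeta1 or zeta5 dominates once the opening tan phi of
   the sectors is small.  One may take tan phi0 = zeta1^2 (1 - zeta1) / 8 and
   c = (1 - zeta1)^2.  The sectors at zeta2, zeta6 and those below the real axis reduce to
   these by the symmetries z -> -conj z and z -> conj z. *)

section \<open>The phase in terms of z + 1/z\<close>

definition joukowski_re :: "real \<Rightarrow> real \<Rightarrow> real" where
  "joukowski_re u v = u + u / (u\<^sup>2 + v\<^sup>2)"

definition joukowski_im :: "real \<Rightarrow> real \<Rightarrow> real" where
  "joukowski_im u v = v - v / (u\<^sup>2 + v\<^sup>2)"

definition re_2i_theta :: "real \<Rightarrow> real \<Rightarrow> real \<Rightarrow> real" where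
  "re_2i_theta A u v =
     joukowski_im u v * (3 * (A\<^sup>2 - (joukowski_re u v)\<^sup>2) + (joukowski_im u v)\<^sup>2)"

lemma re_2i_theta_abs: "re_2i_theta A \<bar>u\<bar> v = re_2i_theta A u v"
proof -
  have "joukowski_re (- u) v = - joukowski_re u v" "joukowski_im (- u) v = joukowski_im u v"
    by (simp_all add: joukowski_re_def joukowski_im_def)
  then show ?thesis
    by (simp add: re_2i_theta_def abs_if)
qed

lemma re_2i_theta_uminus: "re_2i_theta A u (- v) = - re_2i_theta A u v"
proof -
  have "joukowski_re u (- v) = joukowski_re u v" "joukowski_im u (- v) = - joukowski_im u v"
    by (simp_all add: joukowski_re_def joukowski_im_def)
  then show ?thesis
    by (simp add: re_2i_theta_def algebra_simps)
qed

lemma Re_2i_theta_eq: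
  assumes "z \<noteq> 0" and "3 * A\<^sup>2 = 6 - xi"
  shows "Re (2 * \<i> * theta xi z) = re_2i_theta A (Re z) (Im z)"
proof -
  define w where "w = z + inverse z"
  have sq: "(z - inverse z)\<^sup>2 = w\<^sup>2 - 4"
    using assms(1) by (simp add: w_def power2_eq_square field_simps)
  have "theta xi z = w * (of_real (xi - 6) + w\<^sup>2) / 2"
    unfolding theta_def w_def[symmetric] sq by (simp add: algebra_simps)
  also have "complex_of_real (xi - 6) = of_real (- 3 * A\<^sup>2)"
    using assms(2) by simp
  also have "w * (of_real (- 3 * A\<^sup>2) + w\<^sup>2) / 2 = w * (w\<^sup>2 - 3 * (of_real A)\<^sup>2) / 2"
    by simp
  finally have th: "theta xi z = w * (w\<^sup>2 - 3 * (of_real A)\<^sup>2) / 2" .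
  have "Re (2 * \<i> * theta xi z) = Im w * (3 * (A\<^sup>2 - (Re w)\<^sup>2) + (Im w)\<^sup>2)"
    unfolding th by (simp add: power2_eq_square field_simps)
  moreover have "Re w = joukowski_re (Re z) (Im z)" "Im w = joukowski_im (Re z) (Im z)"
    by (simp_all add: w_def joukowski_re_def joukowski_im_def)
  ultimately show ?thesis
    by (simp add: re_2i_theta_def)
qed

lemma zeta1_properties:
  assumes "xi < -6"
  shows "0 < zeta1 xi" "zeta1 xi < 1" "3 * (zeta1 xi + 1 / zeta1 xi)\<^sup>2 = 6 - xi"
proof -
  define s where "s = (- xi - sqrt (xi\<^sup>2 - 36)) / 6"
  have "6 * 6 \<le> (- xi) * (- xi)"
    using assms by (intro mult_mono) auto
  then have root: "sqrt (xi\<^sup>2 - 36) * sqrt (xi\<^sup>2 - 36) = xi\<^sup>2 - 36"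
    by (simp add: power2_eq_square)
  have "sqrt (xi\<^sup>2 - 36) < sqrt (xi\<^sup>2)"
    by (rule real_sqrt_less_mono) simp
  then have "0 < s"
    using assms by (simp add: s_def)
  have "sqrt ((- xi - 6)\<^sup>2) < sqrt (xi\<^sup>2 - 36)"
    using assms by (simp add: power2_eq_square algebra_simps)
  then have "s < 1"
    using assms by (simp add: s_def)
  have zeta1: "zeta1 xi = sqrt s"
    by (simp add: zeta1_def s_def)
  show "0 < zeta1 xi" "zeta1 xi < 1"
    using \<open>0 < s\<close> \<open>s < 1\<close> by (simp_all add: zeta1)
  have "3 * (s * s) + xi * s + 3 = (sqrt (xi\<^sup>2 - 36) * sqrt (xi\<^sup>2 - 36) - xi\<^sup>2 + 36) / 12"
    unfolding s_def by (simp add: field_simps power2_eq_square)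
  also have "\<dots> = 0"
    unfolding root by simp
  finally have "3 * (s * s) + xi * s + 3 = 0" .
  moreover have "(sqrt s + 1 / sqrt s)\<^sup>2 = s + 1/s + 2"
    using \<open>0 < s\<close> by (simp add: power2_eq_square field_simps)
  ultimately show "3 * (zeta1 xi + 1 / zeta1 xi)\<^sup>2 = 6 - xi"
    using \<open>0 < s\<close> by (simp add: zeta1 field_simps)
qed

lemma joukowski_re_minus_eq:
  assumes "u \<noteq> 0" "p \<noteq> 0"
  shows "joukowski_re u v - (p + 1/p) = (u - p) * (u - 1/p) / u - v\<^sup>2 / (u * (u\<^sup>2 + v\<^sup>2))"
proof -
  define r where "r = u\<^sup>2 + v\<^sup>2"
  have "r \<noteq> 0"
    using assms(1) by (simp add: r_def sum_power2_eq_zero_iff)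
  moreover have "v\<^sup>2 = r - u\<^sup>2"
    by (simp add: r_def)
  ultimately have "u / (u\<^sup>2 + v\<^sup>2) = 1/u - v\<^sup>2 / (u * (u\<^sup>2 + v\<^sup>2))"
    using assms(1) unfolding r_def[symmetric] by (simp add: field_simps power2_eq_square)
  moreover have "u + 1/u - (p + 1/p) = (u - p) * (u - 1/p) / u"
    using assms by (simp add: field_simps)
  ultimately show ?thesis
    by (simp add: joukowski_re_def)
qed

lemma joukowski_re_minus_le:
  assumes "0 < u" "p \<noteq> 0"
  shows "joukowski_re u v - (p + 1/p) \<le> (u - p) * (u - 1/p) / u"
proof -
  have "0 \<le> v\<^sup>2 / (u * (u\<^sup>2 + v\<^sup>2))"
    using assms(1) by simp
  then show ?thesis
    using joukowski_re_minus_eq[of u p v] assms by simp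
qed

lemma joukowski_re_add_ge:
  assumes "0 \<le> u" "0 < p"
  shows "u + 2 \<le> joukowski_re u v + (p + 1/p)"
proof -
  have "0 \<le> u / (u\<^sup>2 + v\<^sup>2)"
    using assms(1) by simp
  moreover have "2 \<le> p + 1/p"
    using plus_inverse_ge_2[of p] assms(2) by (simp add: inverse_eq_divide)
  ultimately show ?thesis
    by (simp add: joukowski_re_def)
qed

lemma minus_joukowski_im_ge:
  assumes "0 \<le> v" "0 < u\<^sup>2 + v\<^sup>2" "u\<^sup>2 + v\<^sup>2 \<le> (1 + p) / 2"
  shows "(1 - p) / 2 * v \<le> - joukowski_im u v"
proof -
  define r where "r = u\<^sup>2 + v\<^sup>2"
  have "0 < r" "r \<le> (1 + p) / 2"
    using assms(2,3) by (simp_all add: r_def)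
  have "0 \<le> (1 - r)\<^sup>2 / r"
    using \<open>0 < r\<close> by simp
  also have "\<dots> = (1/r - 1) - (1 - r)"
    using \<open>0 < r\<close> by (simp add: power2_eq_square field_simps)
  finally have "(1 - p) / 2 \<le> 1/r - 1"
    using \<open>r \<le> (1 + p) / 2\<close> by simp
  then have "(1 - p) / 2 * v \<le> (1/r - 1) * v"
    using assms(1) by (rule mult_right_mono)
  then show ?thesis
    by (simp add: joukowski_im_def r_def[symmetric] algebra_simps)
qed

lemma joukowski_im_ge:
  assumes "0 \<le> v" "1 \<le> u" "1/u \<le> (1 + p) / 2"
  shows "(1 - p) / 2 * v \<le> joukowski_im u v"
proof -
  have "u * 1 \<le> u * u"
    using assms(2) by (intro mult_left_mono) auto
  then have "u \<le> u\<^sup>2"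
    by (simp add: power2_eq_square)
  then have "u \<le> u\<^sup>2 + v\<^sup>2"
    using zero_le_power2[of v] by linarith
  then have "1 / (u\<^sup>2 + v\<^sup>2) \<le> 1/u"
    using assms(2) by (intro divide_left_mono) auto
  then have "(1 - p) / 2 \<le> 1 - 1 / (u\<^sup>2 + v\<^sup>2)"
    using assms(3) by simp
  then have "(1 - p) / 2 * v \<le> (1 - 1 / (u\<^sup>2 + v\<^sup>2)) * v"
    using assms(1) by (rule mult_right_mono)
  then show ?thesis
    by (simp add: joukowski_im_def algebra_simps)
qed

section \<open>Estimates near zeta1 and zeta5\<close>

lemma square_diff_ge:
  fixes x y d s :: real
  assumes "0 \<le> d" "d \<le> x - y" "0 \<le> s" "s \<le> x + y"
  shows "d * s \<le> x\<^sup>2 - y\<^sup>2"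
proof -
  have "d * s \<le> (x - y) * (x + y)"
    using assms by (intro mult_mono) auto
  then show ?thesis
    by (simp add: power2_eq_square algebra_simps)
qed

lemma mult_ge_of_linear_bounds:
  fixes p v d x y :: real
  assumes "0 \<le> v" "v \<le> d" "p \<le> 1" "(1 - p) / 2 * v \<le> x" "2 * ((1 - p) * d) \<le> y"
  shows "(1 - p)\<^sup>2 * v\<^sup>2 \<le> x * y"
proof -
  have "(1 - p) * v \<le> (1 - p) * d"
    using assms(2,3) by (intro mult_left_mono) auto
  then have "2 * ((1 - p) * v) \<le> y"
    using assms(5) by linarith
  moreover have "0 \<le> (1 - p) / 2 * v"
    using assms(1,3) by simp
  ultimately have "((1 - p) / 2 * v) * (2 * ((1 - p) * v)) \<le> x * y"
    using assms(4) by (intro mult_mono) auto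
  moreover have "((1 - p) / 2 * v) * (2 * ((1 - p) * v)) = (1 - p)\<^sup>2 * v\<^sup>2"
    by (simp add: power2_eq_square)
  ultimately show ?thesis
    by simp
qed

lemma opening_bounds:
  fixes p t :: real
  assumes "0 < p" "p < 1" "0 \<le> t" "t \<le> p\<^sup>2 * (1 - p) / 8"
  shows "t \<le> (1 - p) / 8" "t \<le> 1" "t\<^sup>2 \<le> (1 - p) / 2"
proof -
  have "p\<^sup>2 * (1 - p) \<le> 1 - p"
    using assms(1,2) by (intro mult_left_le_one_le) (auto simp: power_le_one)
  then show "t \<le> (1 - p) / 8"
    using assms(4) by simp
  then show "t \<le> 1"
    using assms(1) by simp
  then have "t\<^sup>2 \<le> t"
    using assms(3) by (simp add: power2_eq_square mult_left_le_one_le)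
  with \<open>t \<le> (1 - p) / 8\<close> assms(2) show "t\<^sup>2 \<le> (1 - p) / 2"
    by (simp add: field_simps)
qed

lemma joukowski_re_left_of_zeta1:
  fixes p u v :: real
  assumes p: "0 < p" "p < 1" and u: "0 < u" "u < p" and v: "0 \<le> v" "v \<le> u"
    and small: "v / (u\<^sup>2 + v\<^sup>2) \<le> (1 - p) * (p - u) / 2"
  shows "(1 - p) * (p - u) / 2 \<le> joukowski_re u v - (p + 1/p)"
proof -
  have "1 \<le> 1/p"
    using p by simp
  have "(1/p - u) * u \<le> (1/p - u) * 1"
    using u p \<open>1 \<le> 1/p\<close> by (intro mult_left_mono) linarith+
  then have "1/p - u \<le> (1/p - u) / u"
    using u by (simp add: le_divide_eq)
  then have "1 - p \<le> (1/p - u) / u"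
    using u \<open>1 \<le> 1/p\<close> by linarith
  then have "(1 - p) * (p - u) \<le> (1/p - u) / u * (p - u)"
    using u by (intro mult_right_mono) auto
  also have "\<dots> = (u - p) * (u - 1/p) / u"
    using p u by (simp add: field_simps)
  finally have lead: "(1 - p) * (p - u) \<le> (u - p) * (u - 1/p) / u" .
  have "v / (u\<^sup>2 + v\<^sup>2) * (v / u) \<le> (1 - p) * (p - u) / 2 * 1"
    using small v u p by (intro mult_mono) auto
  then have "v\<^sup>2 / (u * (u\<^sup>2 + v\<^sup>2)) \<le> (1 - p) * (p - u) / 2"
    by (simp add: power2_eq_square mult.commute)
  with lead show ?thesis
    using joukowski_re_minus_eq[of u p v] u p by linarith
qed

lemma left_of_zeta1_bounds:
  fixes p t u v :: real
  assumes p: "0 < p" "p < 1" and t: "0 \<le> t" "t \<le> p\<^sup>2 * (1 - p) / 8"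
    and u: "p/2 < u" "u < p" and v: "0 < v" "v < (p - u) * t"
  shows "v \<le> p - u" "u\<^sup>2 + v\<^sup>2 \<le> (1 + p) / 2" "v / (u\<^sup>2 + v\<^sup>2) \<le> (1 - p) * (p - u) / 2"
proof -
  note t_bounds = opening_bounds[OF p t]
  have "(p - u) * t \<le> p - u" "(p - u) * t \<le> t"
    using u p t t_bounds by (auto intro: mult_right_le_one_le mult_left_le_one_le)
  then have "v \<le> p - u" "v \<le> (1 - p) / 8"
    using v t_bounds(1) by linarith+
  then show "v \<le> p - u"
    by simp
  have "v\<^sup>2 \<le> v"
    using v p \<open>v \<le> (1 - p) / 8\<close> by (simp add: power2_eq_square mult_left_le_one_le)
  moreover have "u\<^sup>2 < p\<^sup>2" "p\<^sup>2 \<le> p"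
    using p u by (auto simp: power2_eq_square intro: mult_strict_mono)
  ultimately have "u\<^sup>2 + v\<^sup>2 \<le> p + (1 - p) / 8"
    using \<open>v \<le> (1 - p) / 8\<close> by linarith
  then show "u\<^sup>2 + v\<^sup>2 \<le> (1 + p) / 2"
    using p by (simp add: field_simps)
  have "p\<^sup>2 / 4 < u\<^sup>2"
    using power_strict_mono[OF u(1), of 2] p by (simp add: power_divide)
  then have "p\<^sup>2 / 4 \<le> u\<^sup>2 + v\<^sup>2"
    using zero_le_power2[of v] by linarith
  moreover have "0 < u\<^sup>2 + v\<^sup>2"
    using v by (simp add: add_nonneg_pos)
  ultimately have "v / (u\<^sup>2 + v\<^sup>2) \<le> v / (p\<^sup>2 / 4)"
    using v p by (intro divide_left_mono) auto
  also have "\<dots> = v * (4 / p\<^sup>2)"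
    by simp
  also have "\<dots> \<le> (p - u) * (t * (4 / p\<^sup>2))"
    using v mult_right_mono[of v "(p - u) * t" "4 / p\<^sup>2"] by (simp add: mult.assoc)
  also have "\<dots> \<le> (p - u) * ((1 - p) / 2)"
    \<comment> \<open>the only estimate that needs the factor p^2 in the opening\<close>
    using u p t by (intro mult_left_mono) (auto simp: field_simps)
  finally show "v / (u\<^sup>2 + v\<^sup>2) \<le> (1 - p) * (p - u) / 2"
    by (simp add: mult.commute)
qed

lemma re_2i_theta_left_of_zeta1:
  fixes p t u v :: real
  assumes p: "0 < p" "p < 1" and t: "0 \<le> t" "t \<le> p\<^sup>2 * (1 - p) / 8"
    and u: "p/2 < u" "u < p" and v: "0 < v" "v < (p - u) * t"
  shows "(1 - p)\<^sup>2 * v\<^sup>2 \<le> re_2i_theta (p + 1/p) u v"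
proof -
  define d where "d = p - u"
  note bounds = left_of_zeta1_bounds[OF p t u v, folded d_def]
  have "0 < u" "0 < d" "d < 1" "v \<le> u" "0 < u\<^sup>2 + v\<^sup>2"
    using p u v bounds(1) by (simp_all add: d_def add_nonneg_pos)
  have im: "(1 - p) / 2 * v \<le> - joukowski_im u v"
    using minus_joukowski_im_ge[of v u p] v \<open>0 < u\<^sup>2 + v\<^sup>2\<close> bounds(2) by simp
  have "(1 - p) * d / 2 * 2 \<le> (joukowski_re u v)\<^sup>2 - (p + 1/p)\<^sup>2"
  proof (rule square_diff_ge)
    show "(1 - p) * d / 2 \<le> joukowski_re u v - (p + 1/p)"
      using joukowski_re_left_of_zeta1[OF p \<open>0 < u\<close> u(2) _ \<open>v \<le> u\<close>] v bounds(3)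
      by (simp add: d_def)
    show "2 \<le> joukowski_re u v + (p + 1/p)"
      using joukowski_re_add_ge[of u p v] \<open>0 < u\<close> p by simp
  qed (use \<open>0 < d\<close> p in auto)
  moreover have "(joukowski_im u v)\<^sup>2 \<le> (1 - p) * d / 4"
  proof -
    have "- joukowski_im u v \<le> v / (u\<^sup>2 + v\<^sup>2)"
      using v by (simp add: joukowski_im_def)
    then have "- joukowski_im u v \<le> (1 - p) * d / 2"
      using bounds(3) by linarith
    moreover have "0 \<le> (1 - p) / 2 * v"
      using v p by simp
    then have "0 \<le> - joukowski_im u v"
      using im by linarith
    ultimately have "(- joukowski_im u v)\<^sup>2 \<le> ((1 - p) * d / 2)\<^sup>2"
      by (rule power_mono)
    moreover have "(1 - p) * d * ((1 - p) * d) \<le> (1 - p) * d * 1"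
      using \<open>0 < d\<close> \<open>d < 1\<close> p by (intro mult_left_mono mult_le_one) auto
    ultimately show ?thesis
      by (simp add: power2_eq_square)
  qed
  moreover have "0 \<le> (1 - p) * d"
    using \<open>0 < d\<close> p by simp
  ultimately have re: "2 * ((1 - p) * d) \<le> - (3 * ((p + 1/p)\<^sup>2 - (joukowski_re u v)\<^sup>2) + (joukowski_im u v)\<^sup>2)"
    by argo
  have "(1 - p)\<^sup>2 * v\<^sup>2 \<le> (- joukowski_im u v) * (- (3 * ((p + 1/p)\<^sup>2 - (joukowski_re u v)\<^sup>2) + (joukowski_im u v)\<^sup>2))"
    by (rule mult_ge_of_linear_bounds[OF _ _ _ im re]) (use v p bounds(1) in \<open>auto simp: d_def\<close>)
  then show ?thesis
    by (simp add: re_2i_theta_def algebra_simps)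
qed

lemma re_2i_theta_right_of_zeta1:
  fixes p u v :: real
  assumes p: "0 < p" "p < 1" and u: "p < u" "u < (p + 1) / 2" and v: "0 < v" "v < u - p"
  shows "re_2i_theta (p + 1/p) u v \<le> - ((1 - p)\<^sup>2 * v\<^sup>2)"
proof -
  define d where "d = u - p"
  have "0 < u" "u < 1" "1 \<le> 1/p" "p\<^sup>2 \<le> p"
    using p u by (auto simp: power2_eq_square)
  have "u\<^sup>2 \<le> ((p + 1) / 2)\<^sup>2" "v\<^sup>2 \<le> ((1 - p) / 2)\<^sup>2"
    using u v p by (auto intro!: power_mono)
  then have "u\<^sup>2 + v\<^sup>2 \<le> (1 + p) / 2"
    using \<open>p\<^sup>2 \<le> p\<close> by (simp add: power2_eq_square field_simps)
  then have im: "(1 - p) / 2 * v \<le> - joukowski_im u v"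
    using minus_joukowski_im_ge[of v u p] v \<open>0 < u\<close> by (simp add: add_pos_nonneg)
  have "(1/p - u) * u \<le> (1/p - u) * 1"
    using \<open>u < 1\<close> \<open>1 \<le> 1/p\<close> \<open>0 < u\<close> by (intro mult_left_mono) auto
  then have "1/p - u \<le> (1/p - u) / u"
    using \<open>0 < u\<close> by (simp add: le_divide_eq)
  moreover have "(1 - p) / 2 \<le> 1/p - u"
    using u \<open>1 \<le> 1/p\<close> by (simp add: field_simps)
  ultimately have "(1 - p) / 2 \<le> (1/p - u) / u"
    by linarith
  then have "(1 - p) / 2 * d \<le> (1/p - u) / u * d"
    using u by (intro mult_right_mono) (auto simp: d_def)
  also have "\<dots> = - ((u - p) * (u - 1/p) / u)"
    using \<open>0 < u\<close> p by (simp add: d_def field_simps)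
  also have "\<dots> \<le> (p + 1/p) - joukowski_re u v"
    using joukowski_re_minus_le[of u p v] \<open>0 < u\<close> p by simp
  finally have "(1 - p) / 2 * d * 2 \<le> (p + 1/p)\<^sup>2 - (joukowski_re u v)\<^sup>2"
    using joukowski_re_add_ge[of u p v] \<open>0 < u\<close> p u
    by (intro square_diff_ge) (auto simp: d_def)
  moreover have "0 \<le> (1 - p) * d"
    using u p by (simp add: d_def)
  ultimately have re: "2 * ((1 - p) * d) \<le> 3 * ((p + 1/p)\<^sup>2 - (joukowski_re u v)\<^sup>2) + (joukowski_im u v)\<^sup>2"
    using zero_le_power2[of "joukowski_im u v"] by argo
  have "(1 - p)\<^sup>2 * v\<^sup>2 \<le> (- joukowski_im u v) * ((3 * ((p + 1/p)\<^sup>2 - (joukowski_re u v)\<^sup>2) + (joukowski_im u v)\<^sup>2))"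
    by (rule mult_ge_of_linear_bounds[OF _ _ _ im re]) (use v p in \<open>auto simp: d_def\<close>)
  then show ?thesis
    by (simp add: re_2i_theta_def algebra_simps)
qed

lemma re_2i_theta_left_of_zeta5:
  fixes p u v :: real
  assumes p: "0 < p" "p < 1" and u: "(1 + 1/p) / 2 < u" "u < 1/p" and v: "0 < v" "v < 1/p - u"
  shows "(1 - p)\<^sup>2 * v\<^sup>2 \<le> re_2i_theta (p + 1/p) u v"
proof -
  define d where "d = 1/p - u"
  have "1 \<le> (1 + 1/p) / 2"
    using p by simp
  then have "1 \<le> u" "0 < u"
    using u by linarith+
  have "(1 + 1/p) / 2 * (1 + p) = 2 + (1 - p)\<^sup>2 / (2 * p)"
    using p by (simp add: field_simps power2_eq_square)
  moreover have "(1 + 1/p) / 2 * (1 + p) \<le> u * (1 + p)"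
    using u p by (intro mult_right_mono) auto
  moreover have "0 \<le> (1 - p)\<^sup>2 / (2 * p)"
    using p by simp
  ultimately have "2 \<le> u * (1 + p)"
    by linarith
  then have "1/u \<le> (1 + p) / 2"
    using \<open>0 < u\<close> by (simp add: field_simps)
  then have im: "(1 - p) / 2 * v \<le> joukowski_im u v"
    using joukowski_im_ge[of v u p] v \<open>1 \<le> u\<close> by simp
  have "p / u \<le> p / 1"
    using p \<open>1 \<le> u\<close> by (intro divide_left_mono) auto
  then have "1 - p \<le> (u - p) / u"
    using \<open>0 < u\<close> by (simp add: field_simps)
  then have "(1 - p) * d \<le> (u - p) / u * d"
    using u by (intro mult_right_mono) (auto simp: d_def)
  also have "\<dots> = - ((u - p) * (u - 1/p) / u)"
    using \<open>0 < u\<close> p by (simp add: d_def field_simps)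
  also have "\<dots> \<le> (p + 1/p) - joukowski_re u v"
    using joukowski_re_minus_le[of u p v] \<open>0 < u\<close> p by simp
  finally have "(1 - p) * d * 2 \<le> (p + 1/p)\<^sup>2 - (joukowski_re u v)\<^sup>2"
    using joukowski_re_add_ge[of u p v] \<open>0 < u\<close> p u
    by (intro square_diff_ge) (auto simp: d_def)
  moreover have "0 \<le> (1 - p) * d"
    using u p by (simp add: d_def)
  ultimately have re: "2 * ((1 - p) * d) \<le> 3 * ((p + 1/p)\<^sup>2 - (joukowski_re u v)\<^sup>2) + (joukowski_im u v)\<^sup>2"
    using zero_le_power2[of "joukowski_im u v"] by argo
  have "(1 - p)\<^sup>2 * v\<^sup>2 \<le> joukowski_im u v * ((3 * ((p + 1/p)\<^sup>2 - (joukowski_re u v)\<^sup>2) + (joukowski_im u v)\<^sup>2))"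
    by (rule mult_ge_of_linear_bounds[OF _ _ _ im re]) (use v p in \<open>auto simp: d_def\<close>)
  then show ?thesis
    by (simp add: re_2i_theta_def algebra_simps)
qed

lemma joukowski_re_right_of_zeta5:
  fixes p t u v :: real
  assumes p: "0 < p" "p < 1" and t: "t\<^sup>2 \<le> (1 - p) / 2"
    and u: "1/p < u" and v: "0 \<le> v" "v \<le> (u - 1/p) * t"
  shows "(1 - p) * (u - 1/p) / 2 \<le> joukowski_re u v - (p + 1/p)"
proof -
  define d where "d = u - 1/p"
  have "1 < 1/p"
    using p by simp
  then have "1 < u"
    using u by linarith
  have "0 < d" "d \<le> u"
    using u p by (simp_all add: d_def)
  have "p / u \<le> p / 1"
    using p \<open>1 < u\<close> by (intro divide_left_mono) auto
  then have "1 - p \<le> (u - p) / u"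
    using \<open>1 < u\<close> by (simp add: field_simps)
  then have "(1 - p) * d \<le> (u - p) / u * d"
    using \<open>0 < d\<close> by (intro mult_right_mono) auto
  also have "\<dots> = (u - p) * (u - 1/p) / u"
    using \<open>1 < u\<close> p by (simp add: d_def field_simps)
  finally have lead: "(1 - p) * d \<le> (u - p) * (u - 1/p) / u" .
  have "1 \<le> u\<^sup>2"
    using \<open>1 < u\<close> by (simp add: one_le_power)
  then have "1 \<le> u\<^sup>2 + v\<^sup>2"
    using zero_le_power2[of v] by linarith
  then have "u * 1 \<le> u * (u\<^sup>2 + v\<^sup>2)"
    using \<open>1 < u\<close> by (intro mult_left_mono) auto
  then have "v\<^sup>2 / (u * (u\<^sup>2 + v\<^sup>2)) \<le> v\<^sup>2 / u"
    using \<open>1 < u\<close> by (intro divide_left_mono) auto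
  also have "\<dots> \<le> (d * t)\<^sup>2 / u"
    using v \<open>1 < u\<close> by (intro divide_right_mono power_mono) (auto simp: d_def)
  also have "\<dots> = d * (d / u) * t\<^sup>2"
    by (simp add: power2_eq_square)
  also have "\<dots> \<le> d * 1 * ((1 - p) / 2)"
    using \<open>0 < d\<close> \<open>d \<le> u\<close> \<open>1 < u\<close> t by (intro mult_mono mult_left_mono) auto
  finally have "v\<^sup>2 / (u * (u\<^sup>2 + v\<^sup>2)) \<le> (1 - p) * d / 2"
    by (simp add: mult.commute)
  then show ?thesis
    unfolding d_def[symmetric] using joukowski_re_minus_eq[of u p v] lead \<open>1 < u\<close> p by linarith
qed

lemma right_of_zeta5_bounds:
  fixes p t u v :: real
  assumes p: "0 < p" "p < 1" and t: "t\<^sup>2 \<le> (1 - p) / 2"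
    and u: "1/p < u" and v: "0 < v" "v < (u - 1/p) * t"
  shows "v \<le> u - 1/p" "v\<^sup>2 \<le> (1 - p) * (u - 1/p)\<^sup>2 / 2"
proof -
  define d where "d = u - 1/p"
  have "0 < d"
    using u by (simp add: d_def)
  moreover have "0 < d * t"
    using v by (simp add: d_def)
  ultimately have "0 < t"
    by (simp add: zero_less_mult_iff)
  have "t\<^sup>2 < 1\<^sup>2"
    using t p by simp
  then have "t < 1"
    by (rule power_less_imp_less_base) simp
  then have "d * t \<le> d"
    using \<open>0 < d\<close> \<open>0 < t\<close> by (intro mult_right_le_one_le) auto
  then show "v \<le> u - 1/p"
    using v by (simp add: d_def)
  have "v\<^sup>2 \<le> (d * t)\<^sup>2"
    using v by (intro power_mono) (auto simp: d_def)
  also have "\<dots> \<le> d\<^sup>2 * ((1 - p) / 2)"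
    using mult_left_mono[OF t, of "d\<^sup>2"] by (simp add: power_mult_distrib)
  finally show "v\<^sup>2 \<le> (1 - p) * (u - 1/p)\<^sup>2 / 2"
    by (simp add: d_def mult.commute)
qed

lemma re_2i_theta_right_of_zeta5:
  fixes p t u v :: real
  assumes p: "0 < p" "p < 1" and t: "t\<^sup>2 \<le> (1 - p) / 2"
    and u: "1/p < u" and v: "0 < v" "v < (u - 1/p) * t"
  shows "re_2i_theta (p + 1/p) u v \<le> - ((1 - p)\<^sup>2 * v\<^sup>2)"
proof -
  define d where "d = u - 1/p"
  note bounds = right_of_zeta5_bounds[OF p t u v, folded d_def]
  have "1 < 1/p"
    using p by simp
  then have "1 < u" "0 < d"
    using u by (simp_all add: d_def)
  have "1/u \<le> 1/(1/p)"
    using u p \<open>1 < u\<close> by (intro divide_left_mono) auto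
  then have im: "(1 - p) / 2 * v \<le> joukowski_im u v"
    using joukowski_im_ge[of v u p] v \<open>1 < u\<close> p by simp
  have "0 \<le> (1 - p) / 2 * v" "joukowski_im u v \<le> v"
    using v p by (simp_all add: joukowski_im_def)
  then have "(joukowski_im u v)\<^sup>2 \<le> v\<^sup>2"
    using im by (intro power_mono) auto
  with bounds(2) have "(joukowski_im u v)\<^sup>2 \<le> (1 - p) * d\<^sup>2 / 2"
    by linarith
  moreover have "(1 - p) * d / 2 * (d + 2) \<le> (joukowski_re u v)\<^sup>2 - (p + 1/p)\<^sup>2"
  proof (rule square_diff_ge)
    show "(1 - p) * d / 2 \<le> joukowski_re u v - (p + 1/p)"
      using joukowski_re_right_of_zeta5[OF p t u] v by (simp add: d_def)
    show "d + 2 \<le> joukowski_re u v + (p + 1/p)"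
      using joukowski_re_add_ge[of u p v] \<open>1 < u\<close> \<open>1 < 1/p\<close> p unfolding d_def by linarith
  qed (use \<open>0 < d\<close> p in auto)
  moreover have "(1 - p) * d / 2 * (d + 2) = (1 - p) * d\<^sup>2 / 2 + (1 - p) * d"
    by (simp add: power2_eq_square field_simps)
  moreover have "0 \<le> (1 - p) * d\<^sup>2" "0 \<le> (1 - p) * d"
    using \<open>0 < d\<close> p by simp_all
  ultimately have re: "2 * ((1 - p) * d) \<le> - (3 * ((p + 1/p)\<^sup>2 - (joukowski_re u v)\<^sup>2) + (joukowski_im u v)\<^sup>2)"
    by argo
  have "(1 - p)\<^sup>2 * v\<^sup>2 \<le> joukowski_im u v * (- (3 * ((p + 1/p)\<^sup>2 - (joukowski_re u v)\<^sup>2) + (joukowski_im u v)\<^sup>2))"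
    by (rule mult_ge_of_linear_bounds[OF _ _ _ im re]) (use v p bounds(1) in \<open>auto simp: d_def\<close>)
  then show ?thesis
    by (simp add: re_2i_theta_def algebra_simps)
qed

section \<open>The regions Omega\<close>

(* With p = zeta1 and t = tan phi, these are Omega_11 \<union> Omega_51 and Omega_12 \<union> Omega_52
   as predicates on (Re z, Im z). *)

definition upper_left_sectors :: "real \<Rightarrow> real \<Rightarrow> real \<Rightarrow> real \<Rightarrow> bool" where
  "upper_left_sectors p t u v \<longleftrightarrow> 0 < v \<and>
     (p/2 < u \<and> u < p \<and> v < (p - u) * t \<or> (1 + 1/p) / 2 < u \<and> u < 1/p \<and> v < (1/p - u) * t)"

definition upper_right_sectors :: "real \<Rightarrow> real \<Rightarrow> real \<Rightarrow> real \<Rightarrow> bool" where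
  "upper_right_sectors p t u v \<longleftrightarrow> 0 < v \<and>
     (p < u \<and> u < (p + 1) / 2 \<and> v < (u - p) * t \<or> 1/p < u \<and> v < (u - 1/p) * t)"

lemma re_2i_theta_upper_left_sectors:
  fixes p t u v :: real
  assumes p: "0 < p" "p < 1" and t: "0 \<le> t" "t \<le> p\<^sup>2 * (1 - p) / 8"
    and S: "upper_left_sectors p t u v"
  shows "(1 - p)\<^sup>2 * v\<^sup>2 \<le> re_2i_theta (p + 1/p) u v"
  using S unfolding upper_left_sectors_def
proof (elim conjE disjE)
  assume "0 < v" "p/2 < u" "u < p" "v < (p - u) * t"
  then show ?thesis
    using re_2i_theta_left_of_zeta1[OF p t] by blast
next
  assume v: "0 < v" and u: "(1 + 1/p) / 2 < u" "u < 1/p" and "v < (1/p - u) * t"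
  moreover have "(1/p - u) * t \<le> 1/p - u"
    using u opening_bounds[OF p t] t by (intro mult_right_le_one_le) auto
  ultimately have "v < 1/p - u"
    by linarith
  then show ?thesis
    using re_2i_theta_left_of_zeta5[OF p u v] by simp
qed

lemma re_2i_theta_upper_right_sectors:
  fixes p t u v :: real
  assumes p: "0 < p" "p < 1" and t: "0 \<le> t" "t \<le> p\<^sup>2 * (1 - p) / 8"
    and S: "upper_right_sectors p t u v"
  shows "re_2i_theta (p + 1/p) u v \<le> - ((1 - p)\<^sup>2 * v\<^sup>2)"
  using S unfolding upper_right_sectors_def
proof (elim conjE disjE)
  assume v: "0 < v" and u: "p < u" "u < (p + 1) / 2" and "v < (u - p) * t"
  moreover have "(u - p) * t \<le> u - p"
    using u opening_bounds[OF p t] t by (intro mult_right_le_one_le) auto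
  ultimately have "v < u - p"
    by linarith
  then show ?thesis
    using re_2i_theta_right_of_zeta1[OF p u v] by simp
next
  assume "0 < v" "1/p < u" "v < (u - 1/p) * t"
  then show ?thesis
    using re_2i_theta_right_of_zeta5[OF p opening_bounds(3)[OF p t]] by blast
qed

lemma Omega_1_3_cases:
  assumes "0 < zeta1 xi" "i \<in> {1, 2, 5, 6}" "z \<in> Omega xi phi i 1 \<union> Omega xi phi i 3"
  shows "upper_left_sectors (zeta1 xi) (tan phi) (abs (Re z)) (Im z) \<or>
         upper_right_sectors (zeta1 xi) (tan phi) (abs (Re z)) (- Im z)"
proof -
  \<comment> \<open>as an atom, 1 / zeta1 xi keeps the case analysis within linear arithmetic\<close>
  define q where "q = 1 / zeta1 xi"
  have "0 < q"
    using assms(1) by (simp add: q_def)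
  from assms(2,3) consider "z \<in> Omega xi phi 1 1" | "z \<in> Omega xi phi 1 3"
    | "z \<in> Omega xi phi 2 1" | "z \<in> Omega xi phi 2 3" | "z \<in> Omega xi phi 5 1"
    | "z \<in> Omega xi phi 5 3" | "z \<in> Omega xi phi 6 1" | "z \<in> Omega xi phi 6 3"
    by auto
  then show ?thesis
    using assms(1) \<open>0 < q\<close>
    by cases (simp_all add: Omega_def Let_def zeta2_def zeta5_def zeta6_def upper_left_sectors_def
        upper_right_sectors_def q_def[symmetric] abs_if algebra_simps)
qed

lemma Omega_2_4_cases:
  assumes "0 < zeta1 xi" "i \<in> {1, 2, 5, 6}" "z \<in> Omega xi phi i 2 \<union> Omega xi phi i 4"
  shows "upper_right_sectors (zeta1 xi) (tan phi) (abs (Re z)) (Im z) \<or>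
         upper_left_sectors (zeta1 xi) (tan phi) (abs (Re z)) (- Im z)"
proof -
  define q where "q = 1 / zeta1 xi"
  have "0 < q"
    using assms(1) by (simp add: q_def)
  from assms(2,3) consider "z \<in> Omega xi phi 1 2" | "z \<in> Omega xi phi 1 4"
    | "z \<in> Omega xi phi 2 2" | "z \<in> Omega xi phi 2 4" | "z \<in> Omega xi phi 5 2"
    | "z \<in> Omega xi phi 5 4" | "z \<in> Omega xi phi 6 2" | "z \<in> Omega xi phi 6 4"
    by auto
  then show ?thesis
    using assms(1) \<open>0 < q\<close>
    by cases (simp_all add: Omega_def Let_def zeta2_def zeta5_def zeta6_def upper_left_sectors_def
        upper_right_sectors_def q_def[symmetric] abs_if algebra_simps)
qed

lemma Re_2i_theta_ge_on_Omega_1_3: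
  assumes "xi < -6" and t: "0 \<le> tan phi" "tan phi \<le> (zeta1 xi)\<^sup>2 * (1 - zeta1 xi) / 8"
    and "i \<in> {1, 2, 5, 6}" "z \<in> Omega xi phi i 1 \<union> Omega xi phi i 3"
  shows "(1 - zeta1 xi)\<^sup>2 * (Im z)\<^sup>2 \<le> Re (2 * \<i> * theta xi z)"
proof -
  note p = zeta1_properties[OF assms(1)]
  from Omega_1_3_cases[OF p(1) assms(4,5)]
  have S: "upper_left_sectors (zeta1 xi) (tan phi) \<bar>Re z\<bar> (Im z) \<or>
           upper_right_sectors (zeta1 xi) (tan phi) \<bar>Re z\<bar> (- Im z)" .
  then have "z \<noteq> 0"
    by (auto simp: upper_left_sectors_def upper_right_sectors_def)
  then have "Re (2 * \<i> * theta xi z) = re_2i_theta (zeta1 xi + 1 / zeta1 xi) \<bar>Re z\<bar> (Im z)"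
    using Re_2i_theta_eq[OF _ p(3)] by (simp add: re_2i_theta_abs)
  moreover from S have "(1 - zeta1 xi)\<^sup>2 * (Im z)\<^sup>2 \<le> re_2i_theta (zeta1 xi + 1 / zeta1 xi) \<bar>Re z\<bar> (Im z)"
  proof
    assume "upper_left_sectors (zeta1 xi) (tan phi) \<bar>Re z\<bar> (Im z)"
    then show ?thesis
      by (rule re_2i_theta_upper_left_sectors[OF p(1,2) t])
  next
    assume "upper_right_sectors (zeta1 xi) (tan phi) \<bar>Re z\<bar> (- Im z)"
    from re_2i_theta_upper_right_sectors[OF p(1,2) t this] show ?thesis
      by (simp add: re_2i_theta_uminus)
  qed
  ultimately show ?thesis
    by simp
qed

lemma Re_2i_theta_le_on_Omega_2_4:
  assumes "xi < -6" and t: "0 \<le> tan phi" "tan phi \<le> (zeta1 xi)\<^sup>2 * (1 - zeta1 xi) / 8"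
    and "i \<in> {1, 2, 5, 6}" "z \<in> Omega xi phi i 2 \<union> Omega xi phi i 4"
  shows "Re (2 * \<i> * theta xi z) \<le> - (1 - zeta1 xi)\<^sup>2 * (Im z)\<^sup>2"
proof -
  note p = zeta1_properties[OF assms(1)]
  from Omega_2_4_cases[OF p(1) assms(4,5)]
  have S: "upper_right_sectors (zeta1 xi) (tan phi) \<bar>Re z\<bar> (Im z) \<or>
           upper_left_sectors (zeta1 xi) (tan phi) \<bar>Re z\<bar> (- Im z)" .
  then have "z \<noteq> 0"
    by (auto simp: upper_left_sectors_def upper_right_sectors_def)
  then have "Re (2 * \<i> * theta xi z) = re_2i_theta (zeta1 xi + 1 / zeta1 xi) \<bar>Re z\<bar> (Im z)"
    using Re_2i_theta_eq[OF _ p(3)] by (simp add: re_2i_theta_abs)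
  moreover from S have "re_2i_theta (zeta1 xi + 1 / zeta1 xi) \<bar>Re z\<bar> (Im z) \<le> - ((1 - zeta1 xi)\<^sup>2 * (Im z)\<^sup>2)"
  proof
    assume "upper_right_sectors (zeta1 xi) (tan phi) \<bar>Re z\<bar> (Im z)"
    then show ?thesis
      by (rule re_2i_theta_upper_right_sectors[OF p(1,2) t])
  next
    assume "upper_left_sectors (zeta1 xi) (tan phi) \<bar>Re z\<bar> (- Im z)"
    from re_2i_theta_upper_left_sectors[OF p(1,2) t this] show ?thesis
      by (simp add: re_2i_theta_uminus)
  qed
  ultimately show ?thesis
    by simp
qed

lemma tan_le_of_le_arctan:
  assumes "0 < phi" "phi \<le> arctan x"
  shows "0 < tan phi" "tan phi \<le> x"
proof -
  have "arctan x < pi/2"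
    by (rule arctan_ubound)
  then show "0 < tan phi"
    using assms by (intro tan_gt_zero) auto
  have "tan phi \<le> tan (arctan x)"
    using assms \<open>arctan x < pi/2\<close> by (intro tan_mono_le) auto
  then show "tan phi \<le> x"
    by (simp add: tan_arctan)
qed

theorem mainTheorem5:
  fixes xi :: real
  assumes "xi < -6"
  shows "\<exists>phi0. 0 < phi0 \<and> phi0 \<le> pi/4 \<and>
    (\<forall>phi. 0 < phi \<and> phi \<le> phi0 \<longrightarrow>
      (\<exists>c>0. \<forall>i\<in>{1,2,5,6::nat}.
         (\<forall>z \<in> Omega xi phi i 1 \<union> Omega xi phi i 3.
             Re (2 * \<i> * theta xi z) \<ge> c * (Im z)^2) \<and>
         (\<forall>z \<in> Omega xi phi i 2 \<union> Omega xi phi i 4.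
             Re (2 * \<i> * theta xi z) \<le> - c * (Im z)^2)))"
proof -
  define p where "p = zeta1 xi"
  define t0 where "t0 = p\<^sup>2 * (1 - p) / 8"
  have p: "0 < p" "p < 1"
    using zeta1_properties[OF assms] by (simp_all add: p_def)
  then have "0 < t0" "t0 \<le> 1"
    using opening_bounds(2)[OF p, of t0] by (simp_all add: t0_def)
  show ?thesis
  proof (rule exI[of _ "arctan t0"], intro conjI allI impI)
    show "0 < arctan t0"
      using \<open>0 < t0\<close> by simp
    show "arctan t0 \<le> pi/4"
      using \<open>t0 \<le> 1\<close> arctan_le_iff[of t0 1] by (simp add: arctan_one)
    fix phi assume "0 < phi \<and> phi \<le> arctan t0"
    then have t: "0 \<le> tan phi" "tan phi \<le> (zeta1 xi)\<^sup>2 * (1 - zeta1 xi) / 8"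
      using tan_le_of_le_arctan[of phi t0] by (auto simp: t0_def p_def)
    show "\<exists>c>0. \<forall>i\<in>{1,2,5,6::nat}.
        (\<forall>z \<in> Omega xi phi i 1 \<union> Omega xi phi i 3. Re (2 * \<i> * theta xi z) \<ge> c * (Im z)^2) \<and>
        (\<forall>z \<in> Omega xi phi i 2 \<union> Omega xi phi i 4. Re (2 * \<i> * theta xi z) \<le> - c * (Im z)^2)"
      using p Re_2i_theta_ge_on_Omega_1_3[OF assms t] Re_2i_theta_le_on_Omega_2_4[OF assms t]
      by (intro exI[of _ "(1 - p)\<^sup>2"]) (auto simp: p_def)
  qed
qed

end
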